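(* For all positive integers $n,k$, $$WS^+(n+k) \geq S^+(k+1)\,WS^+(n).$$
   Context: A set $A \subseteq \mathbb{N}$ is sum-free if for all $(a,b)\in A^2$ (allowing $a=b$), $a+b \notin A$; it is weakly sum-free if for all $(a,b)\in A^2$ with $a\neq b$, $a+b\notin A$. An S-template with $m$ colors and width $p$ is a partition of $\{1,\dots,p\}$ into $m$ sum-free subsets $A_1,\dots,A_m$ such that for every $i\in\{1,\dots,m-1\}$ and all $(x,y)\in A_i^2$, $x+y>p$ implies $x+y-p\notin A_i$; $S^+(m)$ is the greatest width of an S-template with $m$ colors. For positive integers $a>b$, let $\pi(x) = (x \bmod a) + a\cdot \mathbb{1}_{\{0,\dots,b\}}(x \bmod a)$. For positive integers $a,m,b$ with $a>b$, a partition $(A_1,\dots,A_m)$ of $\{1,\dots,a+b\}$ is a $b$-WS-template with width $a$ and $m$ colors if: (i) every $A_i$ is weakly sum-free; (ii) every $A_i\setminus\{1,\dots,b\}$ is sum-free; (iii) for all $(x,y)\in A_m^2$, $x+y>b+2a$ implies $x+y-2a\notin A_m$; (iv) for all $i\in\{1,\dots,m-1\}$ and $(x,y)\in A_i^2$, $x+y>a+b$ implies $\pi(x+y)\notin A_i$. $WS^+_b(m)$ is the largest $a$ such that a $b$-WS-template with width $a$ and $m$ colors exists ($0$ if none), and $WS^+(m)=\max_{b\in\mathbb{N}^*} WS^+_b(m)$. *)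

theory Defs
  imports Main "HOL-Library.Extended_Nat"
begin

definition sum_free :: "nat set \<Rightarrow> bool" where
  "sum_free A \<longleftrightarrow> (\<forall>a\<in>A. \<forall>b\<in>A. a + b \<notin> A)"

definition weakly_sum_free :: "nat set \<Rightarrow> bool" where
  "weakly_sum_free A \<longleftrightarrow> (\<forall>a\<in>A. \<forall>b\<in>A. a \<noteq> b \<longrightarrow> a + b \<notin> A)"

definition is_partition :: "nat set \<Rightarrow> nat \<Rightarrow> (nat \<Rightarrow> nat set) \<Rightarrow> bool" where
  "is_partition S m A \<longleftrightarrow>
     (\<Union>i\<in>{1..m}. A i) = S \<and>
     (\<forall>i\<in>{1..m}. \<forall>j\<in>{1..m}. i \<noteq> j \<longrightarrow> A i \<inter> A j = {})"

definition S_template :: "nat \<Rightarrow> nat \<Rightarrow> (nat \<Rightarrow> nat set) \<Rightarrow> bool" where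
  "S_template m p A \<longleftrightarrow>
     is_partition {1..p} m A \<and>
     (\<forall>i\<in>{1..m}. sum_free (A i)) \<and>
     (\<forall>i\<in>{1..m-1}. \<forall>x\<in>A i. \<forall>y\<in>A i. x + y > p \<longrightarrow> x + y - p \<notin> A i)"

definition S_plus :: "nat \<Rightarrow> enat" where
  "S_plus m = Sup {enat p | p. \<exists>A. S_template m p A}"

definition pi_map :: "nat \<Rightarrow> nat \<Rightarrow> nat \<Rightarrow> nat" where
  "pi_map a b x = (x mod a) + (if x mod a \<in> {0..b} then a else 0)"

definition WS_template :: "nat \<Rightarrow> nat \<Rightarrow> nat \<Rightarrow> (nat \<Rightarrow> nat set) \<Rightarrow> bool" where
  "WS_template b a m A \<longleftrightarrow>
     0 < b \<and> b < a \<and> 0 < m \<and>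
     is_partition {1..a+b} m A \<and>
     (\<forall>i\<in>{1..m}. weakly_sum_free (A i)) \<and>
     (\<forall>i\<in>{1..m}. sum_free (A i - {1..b})) \<and>
     (\<forall>x\<in>A m. \<forall>y\<in>A m. x + y > b + 2 * a \<longrightarrow> x + y - 2 * a \<notin> A m) \<and>
     (\<forall>i\<in>{1..m-1}. \<forall>x\<in>A i. \<forall>y\<in>A i. x + y > a + b \<longrightarrow> pi_map a b (x + y) \<notin> A i)"

text \<open>Largest width (0 if none); valued in enat so no finiteness is presupposed.\<close>
definition WS_plus_b :: "nat \<Rightarrow> nat \<Rightarrow> enat" where
  "WS_plus_b b m = Sup {enat a | a. \<exists>A. WS_template b a m A}"

definition WS_plus :: "nat \<Rightarrow> enat" where
  "WS_plus m = (SUP b\<in>{b. 0 < b}. WS_plus_b b m)"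

end

theory Submission
  imports Defs
begin

text \<open>Write z = a q + r with the remainder r in {b+1..a+b}. Colour z by the WS-colour c of r
  when c < n; when c = n, refine this colour by the S-colour of the block number q + 1, which
  yields n + k colours on {1..p a + b}. In a monochromatic sum x + y = z the residues of x and y
  add up to the residue of z up to a carry; the WS conditions leave only the case c = n with a
  carry of exactly one block, and then the block numbers q + 1 of x, y, z form a monochromatic
  sum (or, across the wrap-around, a sum modulo p) in the S-template.\<close>

definition shifted_div :: "nat \<Rightarrow> nat \<Rightarrow> nat \<Rightarrow> nat" where
  "shifted_div a b z = (if z \<le> b then 0 else (z - b - 1) div a)"

definition shifted_mod :: "nat \<Rightarrow> nat \<Rightarrow> nat \<Rightarrow> nat" where
  "shifted_mod a b z = (if z \<le> b then z else (z - b - 1) mod a + b + 1)"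

lemma shifted_div_mod_eq: "a * shifted_div a b z + shifted_mod a b z = z"
proof (cases "z \<le> b")
  case False
  have "a * ((z - b - 1) div a) + (z - b - 1) mod a = z - b - 1"
    by (rule mult_div_mod_eq)
  with False show ?thesis
    by (simp add: shifted_div_def shifted_mod_def)
qed (simp add: shifted_div_def shifted_mod_def)

lemma shifted_div_mod_small [simp]:
  "z \<le> b \<Longrightarrow> shifted_mod a b z = z"
  "z \<le> b \<Longrightarrow> shifted_div a b z = 0"
  by (simp_all add: shifted_div_def shifted_mod_def)

lemma shifted_mod_gt_iff [simp]: "b < shifted_mod a b z \<longleftrightarrow> b < z"
  by (simp add: shifted_mod_def)

lemma shifted_mod_le_iff [simp]: "shifted_mod a b z \<le> b \<longleftrightarrow> z \<le> b"
  by (simp add: shifted_mod_def)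

lemma shifted_mod_pos: "0 < z \<Longrightarrow> 0 < shifted_mod a b z"
  by (simp add: shifted_mod_def)

lemma shifted_mod_le: "0 < a \<Longrightarrow> shifted_mod a b z \<le> a + b"
  by (simp add: shifted_mod_def Suc_leI)

lemma shifted_div_mod_unique:
  assumes "b < r" "r \<le> a + b" "z = a * j + r"
  shows "shifted_mod a b z = r \<and> shifted_div a b z = j"
proof -
  have "z - b - 1 = (r - b - 1) + a * j" "r - b - 1 < a"
    using assms by simp_all
  then have "(z - b - 1) mod a = r - b - 1" "(z - b - 1) div a = j"
    by simp_all
  with assms show ?thesis
    by (simp add: shifted_div_def shifted_mod_def)
qed

lemma shifted_div_mod_eqI:
  assumes "a * j + b < z" "z \<le> a * j + a + b"
  shows "shifted_mod a b z = z - a * j \<and> shifted_div a b z = j"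
  using assms by (intro shifted_div_mod_unique) auto

lemma shifted_div_mod_le_self:
  assumes "z \<le> a + b"
  shows "shifted_mod a b z = z \<and> shifted_div a b z = 0"
  using assms shifted_div_mod_eqI[of a 0 b z] by (cases "z \<le> b") simp_all

lemma shifted_div_less:
  assumes "0 < p" "z \<le> p * a + b"
  shows "shifted_div a b z < p"
proof (cases "z \<le> b")
  case False
  have "a * shifted_div a b z + shifted_mod a b z = z" by (rule shifted_div_mod_eq)
  moreover have "b < shifted_mod a b z" using False by simp
  ultimately have "a * shifted_div a b z < p * a"
    using assms(2) by linarith
  then show ?thesis by (simp add: mult.commute[of p a])
qed (use assms in simp)

lemma pi_map_eq_shifted_mod:
  assumes "b < a" "b < w"
  shows "pi_map a b w = shifted_mod a b w"
proof (cases "w mod a \<le> b")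
  case True
  have "a \<le> w"
    using True assms by (metis mod_less not_le)
  then have "0 < w div a"
    using assms by (simp add: div_greater_zero_iff)
  then have "w = a * (w div a - 1) + (w mod a + a)"
    by (metis Suc_diff_1 add.assoc add.commute mult_Suc_right mult_div_mod_eq)
  with True assms show ?thesis
    using shifted_div_mod_unique[of b "w mod a + a" a w] by (simp add: pi_map_def)
next
  case False
  have "w mod a < a"
    using assms by simp
  with False show ?thesis
    using shifted_div_mod_unique[of b "w mod a" a w "w div a"] by (simp add: pi_map_def)
qed

lemma shifted_div_mod_add:
  fixes a b x y :: nat
  assumes "0 < a"
  defines "s \<equiv> shifted_mod a b x + shifted_mod a b y"
  shows "shifted_mod a b (x + y) = shifted_mod a b s"
    and "shifted_div a b (x + y) = shifted_div a b x + shifted_div a b y + shifted_div a b s"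
proof -
  have "shifted_mod a b (x + y) = shifted_mod a b s \<and>
      shifted_div a b (x + y) = shifted_div a b x + shifted_div a b y + shifted_div a b s"
  proof (cases "b < shifted_mod a b s")
    case True
    have "x + y = a * (shifted_div a b x + shifted_div a b y + shifted_div a b s) + shifted_mod a b s"
      using shifted_div_mod_eq[of a b x] shifted_div_mod_eq[of a b y] shifted_div_mod_eq[of a b s]
      unfolding s_def by (simp add: algebra_simps)
    then show ?thesis
      using True shifted_mod_le[OF assms(1)] by (intro shifted_div_mod_unique) auto
  next
    case False
    then have "s \<le> b"
      by simp
    then have "shifted_mod a b x \<le> b" "shifted_mod a b y \<le> b"
      unfolding s_def by linarith+
    with \<open>s \<le> b\<close> show ?thesis
      unfolding s_def by simp
  qed
  then show "shifted_mod a b (x + y) = shifted_mod a b s"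
    and "shifted_div a b (x + y) = shifted_div a b x + shifted_div a b y + shifted_div a b s"
    by simp_all
qed

lemma shifted_div_mod_mult:
  fixes a b p z :: nat
  assumes "0 < a"
  defines "w \<equiv> shifted_mod (p * a) b z"
  shows "shifted_mod a b w = shifted_mod a b z"
    and "shifted_div a b z = p * shifted_div (p * a) b z + shifted_div a b w"
proof -
  have "shifted_mod a b z = shifted_mod a b w \<and>
      shifted_div a b z = p * shifted_div (p * a) b z + shifted_div a b w"
  proof (cases "b < z")
    case True
    have "z = a * (p * shifted_div (p * a) b z + shifted_div a b w) + shifted_mod a b w"
      using shifted_div_mod_eq[of "p * a" b z] shifted_div_mod_eq[of a b w]
      unfolding w_def by (simp add: algebra_simps)
    then show ?thesis
      using True shifted_mod_le[OF assms(1)] by (intro shifted_div_mod_unique) (auto simp: w_def)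
  qed (simp add: w_def)
  then show "shifted_mod a b w = shifted_mod a b z"
    and "shifted_div a b z = p * shifted_div (p * a) b z + shifted_div a b w"
    by simp_all
qed

lemma shifted_mod_distinct:
  assumes "x \<noteq> y \<or> b < x"
  shows "shifted_mod a b x \<noteq> shifted_mod a b y \<or> b < shifted_mod a b x"
  using assms by (cases "x \<le> b"; cases "y \<le> b") auto

text \<open>Colour i < n is kept from A; colour n - 1 + l, for l = 1..k+1, consists of the z with
  remainder in A n and block number in B l.\<close>

definition template_product ::
    "nat \<Rightarrow> nat \<Rightarrow> nat \<Rightarrow> nat \<Rightarrow> (nat \<Rightarrow> nat set) \<Rightarrow> (nat \<Rightarrow> nat set) \<Rightarrow> nat \<Rightarrow> nat set" where
  "template_product a b n p A B i =
     {z \<in> {1..p * a + b}. shifted_mod a b z \<in> A (min i n) \<and>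
        (n \<le> i \<longrightarrow> shifted_div a b z + 1 \<in> B (i + 1 - n))}"

lemma weakly_sum_free_sum_free_diff_iff:
  assumes "0 \<notin> X"
  shows "weakly_sum_free X \<and> sum_free (X - {1..b}) \<longleftrightarrow>
    (\<forall>x\<in>X. \<forall>y\<in>X. x \<noteq> y \<or> b < x \<longrightarrow> x + y \<notin> X)"
proof -
  have "x \<in> X - {1..b} \<longleftrightarrow> x \<in> X \<and> b < x" for x
    using assms by (cases "x = 0") auto
  then show ?thesis
    unfolding weakly_sum_free_def sum_free_def by (metis add.commute trans_less_add2)
qed

locale template_pair =
  fixes a b n k p :: nat and A B :: "nat \<Rightarrow> nat set"
  assumes S: "S_template (k + 1) p B"
    and W: "WS_template b a n A"
    and p_pos: "0 < p"
begin

abbreviation C :: "nat \<Rightarrow> nat set" where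
  "C \<equiv> template_product a b n p A B"

lemma b_less_a: "b < a"
  using W unfolding WS_template_def by blast

lemma n_pos: "0 < n"
  using W unfolding WS_template_def by blast

lemma a_pos: "0 < a"
  using b_less_a by simp

lemma b_less_pa: "b < p * a"
proof -
  have "a \<le> p * a"
    using p_pos by simp
  with b_less_a show ?thesis
    by linarith
qed

lemma A_subset: "c \<in> {1..n} \<Longrightarrow> A c \<subseteq> {1..a + b}"
  using W unfolding WS_template_def is_partition_def by blast

lemma A_add_notin:
  assumes "c \<in> {1..n}" "r \<in> A c" "r' \<in> A c" "r \<noteq> r' \<or> b < r"
  shows "r + r' \<notin> A c"
proof -
  have "0 \<notin> A c"
    using A_subset[OF assms(1)] by auto
  moreover have "weakly_sum_free (A c)" "sum_free (A c - {1..b})"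
    using W assms(1) unfolding WS_template_def by auto
  ultimately show ?thesis
    using weakly_sum_free_sum_free_diff_iff assms(2-4) by blast
qed

lemma A_last_wrap_notin:
  "x \<in> A n \<Longrightarrow> y \<in> A n \<Longrightarrow> b + 2 * a < x + y \<Longrightarrow> x + y - 2 * a \<notin> A n"
  using W unfolding WS_template_def by blast

lemma A_pi_map_notin:
  "c \<in> {1..n - 1} \<Longrightarrow> x \<in> A c \<Longrightarrow> y \<in> A c \<Longrightarrow> a + b < x + y \<Longrightarrow> pi_map a b (x + y) \<notin> A c"
  using W unfolding WS_template_def by blast

lemma carry_forces_last_color:
  assumes c: "c \<in> {1..n}" and r: "r \<in> A c" and r': "r' \<in> A c" and ne: "r \<noteq> r' \<or> b < r"
    and sum: "shifted_mod a b (r + r') \<in> A c"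
  shows "c = n \<and> shifted_div a b (r + r') = 1"
proof -
  have "r \<le> a + b" "r' \<le> a + b"
    using A_subset[OF c] r r' by auto
  have "a + b < r + r'"
  proof (rule ccontr)
    assume "\<not> a + b < r + r'"
    then have "r + r' \<in> A c"
      using sum shifted_div_mod_le_self by (simp add: not_less)
    then show False
      using A_add_notin[OF c r r' ne] by simp
  qed
  have "c = n"
  proof (rule ccontr)
    assume "c \<noteq> n"
    then have "c \<in> {1..n - 1}"
      using c by auto
    moreover have "pi_map a b (r + r') = shifted_mod a b (r + r')"
      using \<open>a + b < r + r'\<close> b_less_a by (intro pi_map_eq_shifted_mod) auto
    ultimately show False
      using A_pi_map_notin r r' sum \<open>a + b < r + r'\<close> by metis
  qed
  have "r + r' \<le> 2 * a + b"
  proof (rule ccontr)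
    assume big: "\<not> r + r' \<le> 2 * a + b"
    then have "shifted_mod a b (r + r') = r + r' - 2 * a"
      using shifted_div_mod_eqI[of a 2 b "r + r'"] \<open>r \<le> a + b\<close> \<open>r' \<le> a + b\<close> b_less_a by simp
    moreover have "b + 2 * a < r + r'"
      using big by simp
    ultimately show False
      using A_last_wrap_notin[of r r'] r r' sum \<open>c = n\<close> by simp
  qed
  then have "shifted_div a b (r + r') = 1"
    using shifted_div_mod_eqI[of a 1 b "r + r'"] \<open>a + b < r + r'\<close> by simp
  with \<open>c = n\<close> show ?thesis ..
qed

lemma B_add_notin: "l \<in> {1..k + 1} \<Longrightarrow> u \<in> B l \<Longrightarrow> v \<in> B l \<Longrightarrow> u + v \<notin> B l"
  using S unfolding S_template_def sum_free_def by blast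

lemma B_wrap_notin: "l \<in> {1..k} \<Longrightarrow> u \<in> B l \<Longrightarrow> v \<in> B l \<Longrightarrow> p < u + v \<Longrightarrow> u + v - p \<notin> B l"
  using S unfolding S_template_def by auto

lemma template_product_memD:
  assumes "z \<in> C i"
  shows "1 \<le> z" "z \<le> p * a + b" "shifted_mod a b z \<in> A (min i n)"
    and "n \<le> i \<Longrightarrow> shifted_div a b z + 1 \<in> B (i + 1 - n)"
  using assms by (simp_all add: template_product_def)

lemma template_product_carry:
  assumes i: "i \<in> {1..n + k}" and x: "x \<in> C i" and y: "y \<in> C i" and ne: "x \<noteq> y \<or> b < x"
    and z: "z \<in> C i" "shifted_mod a b z = shifted_mod a b (x + y)"
  shows "n \<le> i \<and> shifted_div a b (x + y) = shifted_div a b x + shifted_div a b y + 1"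
proof -
  define s where "s = shifted_mod a b x + shifted_mod a b y"
  have sum: "shifted_mod a b (x + y) = shifted_mod a b s"
    "shifted_div a b (x + y) = shifted_div a b x + shifted_div a b y + shifted_div a b s"
    unfolding s_def using shifted_div_mod_add[OF a_pos] by blast+
  have "min i n \<in> {1..n}"
    using i n_pos by auto
  moreover have "shifted_mod a b s \<in> A (min i n)"
    using template_product_memD(3)[OF z(1)] z(2) sum(1) by simp
  ultimately have "min i n = n \<and> shifted_div a b s = 1"
    using carry_forces_last_color shifted_mod_distinct[OF ne]
      template_product_memD(3)[OF x] template_product_memD(3)[OF y]
    unfolding s_def by blast
  with sum(2) show ?thesis
    by auto
qed

lemma template_product_add_notin:
  assumes i: "i \<in> {1..n + k}" and x: "x \<in> C i" and y: "y \<in> C i" and ne: "x \<noteq> y \<or> b < x"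
  shows "x + y \<notin> C i"
proof
  assume xy: "x + y \<in> C i"
  then have "n \<le> i" and carry:
    "shifted_div a b (x + y) + 1 = (shifted_div a b x + 1) + (shifted_div a b y + 1)"
    using template_product_carry[OF i x y ne xy] by simp_all
  have "i + 1 - n \<in> {1..k + 1}"
    using i \<open>n \<le> i\<close> by auto
  moreover have "shifted_div a b x + 1 \<in> B (i + 1 - n)" "shifted_div a b y + 1 \<in> B (i + 1 - n)"
    "shifted_div a b (x + y) + 1 \<in> B (i + 1 - n)"
    using template_product_memD(4) x y xy \<open>n \<le> i\<close> by blast+
  ultimately show False
    using B_add_notin carry by metis
qed

lemma template_product_last_wrap_notin:
  assumes x: "x \<in> C (n + k)" and y: "y \<in> C (n + k)" and big: "b + 2 * (p * a) < x + y"
  shows "x + y - 2 * (p * a) \<notin> C (n + k)"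
proof
  define z where "z = x + y - 2 * (p * a)"
  assume "x + y - 2 * (p * a) \<in> C (n + k)"
  then have z_mem: "z \<in> C (n + k)"
    unfolding z_def .
  have "b < z" "z \<le> a + b"
    using big b_less_a template_product_memD(2)[OF x] template_product_memD(2)[OF y]
    unfolding z_def by auto
  moreover have "x + y = a * (2 * p) + z"
    using big unfolding z_def by simp
  ultimately have xy: "shifted_mod a b (x + y) = z" "shifted_div a b (x + y) = 2 * p"
    using shifted_div_mod_unique by blast+
  have "shifted_mod a b z = shifted_mod a b (x + y)"
    using shifted_div_mod_le_self[of z a b] \<open>z \<le> a + b\<close> xy(1) by simp
  moreover have "n + k \<in> {1..n + k}" "x \<noteq> y \<or> b < x"
    using n_pos big b_less_pa by auto
  ultimately have "shifted_div a b (x + y) = shifted_div a b x + shifted_div a b y + 1"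
    using template_product_carry x y z_mem by blast
  moreover have "shifted_div a b x < p" "shifted_div a b y < p"
    using shifted_div_less p_pos template_product_memD(2) x y by blast+
  ultimately show False
    using xy(2) by linarith
qed

lemma template_product_pi_map_notin:
  assumes i: "i \<in> {1..n + k - 1}" and x: "x \<in> C i" and y: "y \<in> C i"
    and big: "p * a + b < x + y"
  shows "pi_map (p * a) b (x + y) \<notin> C i"
proof
  define w where "w = shifted_mod (p * a) b (x + y)"
  define t where "t = shifted_div (p * a) b (x + y)"
  assume "pi_map (p * a) b (x + y) \<in> C i"
  then have w_mem: "w \<in> C i"
    using pi_map_eq_shifted_mod[OF b_less_pa] big unfolding w_def by simp
  have "p * a * t + w = x + y"
    unfolding w_def t_def by (rule shifted_div_mod_eq)
  then have "0 < t"
    using big template_product_memD(2)[OF w_mem] by (cases t) auto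
  have nested: "shifted_mod a b w = shifted_mod a b (x + y)"
    "shifted_div a b (x + y) = p * t + shifted_div a b w"
    unfolding w_def t_def using shifted_div_mod_mult[OF a_pos] by blast+
  have "i \<in> {1..n + k}" "x \<noteq> y \<or> b < x"
    using i big b_less_pa by auto
  then have "n \<le> i" and carry:
    "p * t + shifted_div a b w = shifted_div a b x + shifted_div a b y + 1"
    using template_product_carry x y w_mem nested by auto
  have "shifted_div a b x < p" "shifted_div a b y < p"
    using shifted_div_less p_pos template_product_memD(2) x y by blast+
  then have "p * t < p * 2"
    using carry by linarith
  with \<open>0 < t\<close> have "t = 1"
    by simp
  have "i + 1 - n \<in> {1..k}"
    using i \<open>n \<le> i\<close> by auto
  moreover have "shifted_div a b x + 1 \<in> B (i + 1 - n)" "shifted_div a b y + 1 \<in> B (i + 1 - n)"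
    "shifted_div a b w + 1 \<in> B (i + 1 - n)"
    using template_product_memD(4) x y w_mem \<open>n \<le> i\<close> by blast+
  moreover have "p < (shifted_div a b x + 1) + (shifted_div a b y + 1)"
    "(shifted_div a b x + 1) + (shifted_div a b y + 1) - p = shifted_div a b w + 1"
    using carry \<open>t = 1\<close> by simp_all
  ultimately show False
    using B_wrap_notin by metis
qed

lemma template_product_Union: "(\<Union>i\<in>{1..n + k}. C i) = {1..p * a + b}"
proof (intro equalityI subsetI)
  fix z
  assume z: "z \<in> {1..p * a + b}"
  have "shifted_mod a b z \<in> {1..a + b}"
    using z shifted_mod_pos shifted_mod_le[OF a_pos] by (simp add: Suc_le_eq)
  then obtain c where c: "c \<in> {1..n}" "shifted_mod a b z \<in> A c"
    using W unfolding WS_template_def is_partition_def by blast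
  show "z \<in> (\<Union>i\<in>{1..n + k}. C i)"
  proof (cases "c < n")
    case True
    then have "z \<in> C c"
      using z c by (simp add: template_product_def)
    then show ?thesis
      using c by auto
  next
    case False
    have "shifted_div a b z + 1 \<in> {1..p}"
      using shifted_div_less p_pos z by (simp add: Suc_le_eq)
    then obtain l where l: "l \<in> {1..k + 1}" "shifted_div a b z + 1 \<in> B l"
      using S unfolding S_template_def is_partition_def by blast
    moreover have "min (n + l - 1) n = n" "n + l - 1 + 1 - n = l"
      using l by auto
    ultimately have "z \<in> C (n + l - 1)"
      using z c False by (simp add: template_product_def)
    then show ?thesis
      using l n_pos by force
  qed
qed (auto dest: template_product_memD)

lemma template_product_disjoint:
  assumes i: "i \<in> {1..n + k}" and j: "j \<in> {1..n + k}" and "i \<noteq> j"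
  shows "C i \<inter> C j = {}"
proof (rule ccontr)
  assume "C i \<inter> C j \<noteq> {}"
  then obtain z where zi: "z \<in> C i" and zj: "z \<in> C j"
    by blast
  have "min i n \<in> {1..n}" "min j n \<in> {1..n}"
    using i j n_pos by auto
  then have "min i n = min j n"
    using template_product_memD(3)[OF zi] template_product_memD(3)[OF zj] W
    unfolding WS_template_def is_partition_def by blast
  then have "n \<le> i" "n \<le> j" "i + 1 - n \<noteq> j + 1 - n"
    using \<open>i \<noteq> j\<close> by (auto simp: min_def split: if_splits)
  moreover have "i + 1 - n \<in> {1..k + 1}" "j + 1 - n \<in> {1..k + 1}"
    using i j \<open>n \<le> i\<close> \<open>n \<le> j\<close> by auto
  ultimately show False
    using template_product_memD(4)[OF zi] template_product_memD(4)[OF zj] S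
    unfolding S_template_def is_partition_def by blast
qed

lemma WS_template_product: "WS_template b (p * a) (n + k) C"
  unfolding WS_template_def
proof (intro conjI ballI impI)
  show "0 < b" "b < p * a" "0 < n + k"
    using W b_less_pa n_pos unfolding WS_template_def by auto
  show "is_partition {1..p * a + b} (n + k) C"
    unfolding is_partition_def using template_product_Union template_product_disjoint by simp
next
  fix i
  assume "i \<in> {1..n + k}"
  moreover have "0 \<notin> C i"
    by (auto dest: template_product_memD)
  ultimately show "weakly_sum_free (C i)" "sum_free (C i - {1..b})"
    using weakly_sum_free_sum_free_diff_iff template_product_add_notin by blast+
qed (use template_product_last_wrap_notin template_product_pi_map_notin in blast)+

end

lemma WS_plus_ge_mult:
  assumes "S_template (k + 1) p B" and "WS_template b a n A"
  shows "enat (p * a) \<le> WS_plus (n + k)"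
proof (cases "p = 0")
  case False
  then interpret template_pair a b n k p A B
    using assms by unfold_locales auto
  have "WS_template b (p * a) (n + k) (template_product a b n p A B)"
    by (rule WS_template_product)
  moreover have "0 < b"
    using assms(2) unfolding WS_template_def by blast
  ultimately have "enat (p * a) \<le> WS_plus_b b (n + k)"
    unfolding WS_plus_b_def by (intro Sup_upper) blast
  also have "\<dots> \<le> WS_plus (n + k)"
    unfolding WS_plus_def using \<open>0 < b\<close> by (intro SUP_upper) simp
  finally show ?thesis .
qed (simp add: zero_enat_def[symmetric])

lemma Sup_mult_le_enat:
  fixes X :: "enat set"
  assumes "\<And>x. x \<in> X \<Longrightarrow> x * y \<le> R"
  shows "Sup X * y \<le> R"
proof (cases "y = 0 \<or> R = \<infinity>")
  case False
  then obtain r where r: "R = enat r" and "0 < y"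
    by (cases R) auto
  have "1 \<le> y"
    using \<open>0 < y\<close> by (metis ileI1 one_eSuc)
  then have "x \<le> enat r" if "x \<in> X" for x
    using mult_left_mono[of 1 y x] assms[OF that] r by simp
  then have "finite X"
    by (rule finite_enat_bounded)
  then show ?thesis
    using assms by (cases "X = {}") (simp_all add: Sup_enat_def)
qed auto

theorem corollary3p22:
  fixes n k :: nat
  assumes "0 < n" and "0 < k"
  shows "WS_plus (n + k) \<ge> S_plus (k + 1) * WS_plus n"
proof -
  have "enat p * WS_plus n \<le> WS_plus (n + k)" if S: "S_template (k + 1) p B" for p B
  proof -
    have "WS_plus_b b n * enat p \<le> WS_plus (n + k)" for b
      unfolding WS_plus_b_def using WS_plus_ge_mult[OF S]
      by (intro Sup_mult_le_enat) (auto simp: mult.commute)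
    then have "WS_plus n * enat p \<le> WS_plus (n + k)"
      unfolding WS_plus_def by (intro Sup_mult_le_enat) auto
    then show ?thesis
      by (simp add: mult.commute)
  qed
  then show ?thesis
    unfolding S_plus_def by (intro Sup_mult_le_enat) auto
qed

end
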